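(* Let $\mathbb{C}$ be a regular category. If the Pairwise Chinese Remainder Theorem holds in $\mathbb{C}$, then $\mathbb{C}$ has finite 2-fold subobject decompositions.
   Context: A category is regular if it has finite limits and coequalizers of kernel pairs and regular epimorphisms are pullback-stable; the image of a subobject under a morphism is given by regular epi–mono factorization. For $w:S\to W$ and subobject $A$ of $W$, $w\in_S A$ means $w$ factors through a representative of $A$. For an equivalence relation $\theta$ on $X$ and $a,b:S\to X$, $a\equiv b\bmod\theta$ means $(a,b)\in_S\theta$. An equivalence relation is effective if it is the kernel pair of some morphism. Given $a_1,\dots,a_m:S\to X$ and equivalence relations $\theta_1,\dots,\theta_m$ on $X$, the system $x\equiv a_i\bmod\theta_i$ ($i=1,\dots,m$) is approximately solvable if there are a regular epimorphism $\alpha:Q\to S$ and a morphism $a:Q\to X$ with $a\equiv a_i\alpha\bmod\theta_i$ for all $i$; it is approximately pairwise solvable if for all $i,j$ the two-equation subsystem for $i,j$ is approximately solvable. The Pairwise Chinese Remainder Theorem holds in $\mathbb{C}$ if for every object $X$, every $m$, all $a_1,\dots,a_m:S\to X$ and all effective equivalence relations $\theta_1,\dots,\theta_m$ on $X$, approximate pairwise solvability implies approximate solvability. $\mathbb{C}$ has finite 2-fold subobject decompositions if for every positive integer $n$, all objects $A_1,\dots,A_n$ and all subobjects $S,T$ of $A_1\times\cdots\times A_n$: if for all $i,j\in\{1,\dots,n\}$ the images of $S$ and $T$ under $(\pi_i,\pi_j):A_1\times\cdots\times A_n\to A_i\times A_j$ coincide, then $S=T$. *)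

theory Defs
  imports Main
begin

text \<open>Elementary (arrows-only-with-objects) categories, given explicitly as a record.
  Cmp C g f denotes the composite g after f (defined when Cod f = Dom g).\<close>

record ('o, 'a) category =
  Obj :: "'o set"
  Arr :: "'a set"
  Dom :: "'a \<Rightarrow> 'o"
  Cod :: "'a \<Rightarrow> 'o"
  Idt :: "'o \<Rightarrow> 'a"
  Cmp :: "'a \<Rightarrow> 'a \<Rightarrow> 'a"

definition hom :: "('o, 'a, 'z) category_scheme \<Rightarrow> 'o \<Rightarrow> 'o \<Rightarrow> 'a set" where
  "hom C X Y = {f \<in> Arr C. Dom C f = X \<and> Cod C f = Y}"

definition is_category :: "('o, 'a, 'z) category_scheme \<Rightarrow> bool" where
  "is_category C \<longleftrightarrow>
     (\<forall>f \<in> Arr C. Dom C f \<in> Obj C \<and> Cod C f \<in> Obj C) \<and>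
     (\<forall>X \<in> Obj C. Idt C X \<in> hom C X X) \<and>
     (\<forall>f \<in> Arr C. \<forall>g \<in> Arr C. Cod C f = Dom C g \<longrightarrow>
         Cmp C g f \<in> hom C (Dom C f) (Cod C g)) \<and>
     (\<forall>f \<in> Arr C. Cmp C f (Idt C (Dom C f)) = f \<and> Cmp C (Idt C (Cod C f)) f = f) \<and>
     (\<forall>f \<in> Arr C. \<forall>g \<in> Arr C. \<forall>h \<in> Arr C. Cod C f = Dom C g \<and> Cod C g = Dom C h \<longrightarrow>
         Cmp C h (Cmp C g f) = Cmp C (Cmp C h g) f)"

definition mono :: "('o, 'a, 'z) category_scheme \<Rightarrow> 'a \<Rightarrow> bool" where
  "mono C m \<longleftrightarrow> m \<in> Arr C \<and>
     (\<forall>g h. g \<in> Arr C \<and> h \<in> Arr C \<and> Cod C g = Dom C m \<and> Cod C h = Dom C m \<and>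
            Dom C g = Dom C h \<and> Cmp C m g = Cmp C m h \<longrightarrow> g = h)"

definition coequalizer :: "('o, 'a, 'z) category_scheme \<Rightarrow> 'a \<Rightarrow> 'a \<Rightarrow> 'a \<Rightarrow> bool" where
  "coequalizer C u v e \<longleftrightarrow>
     u \<in> Arr C \<and> v \<in> Arr C \<and> e \<in> Arr C \<and>
     Dom C u = Dom C v \<and> Cod C u = Cod C v \<and> Dom C e = Cod C u \<and>
     Cmp C e u = Cmp C e v \<and>
     (\<forall>Y h. Y \<in> Obj C \<and> h \<in> hom C (Dom C e) Y \<and> Cmp C h u = Cmp C h v \<longrightarrow>
        (\<exists>!k. k \<in> hom C (Cod C e) Y \<and> Cmp C k e = h))"

definition regular_epi :: "('o, 'a, 'z) category_scheme \<Rightarrow> 'a \<Rightarrow> bool" where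
  "regular_epi C e \<longleftrightarrow> (\<exists>u v. coequalizer C u v e)"

definition pullback :: "('o, 'a, 'z) category_scheme \<Rightarrow> 'a \<Rightarrow> 'a \<Rightarrow> 'a \<Rightarrow> 'a \<Rightarrow> bool" where
  "pullback C f g p q \<longleftrightarrow>
     f \<in> Arr C \<and> g \<in> Arr C \<and> p \<in> Arr C \<and> q \<in> Arr C \<and>
     Cod C f = Cod C g \<and> Dom C p = Dom C q \<and> Cod C p = Dom C f \<and> Cod C q = Dom C g \<and>
     Cmp C f p = Cmp C g q \<and>
     (\<forall>W x y. W \<in> Obj C \<and> x \<in> hom C W (Dom C f) \<and> y \<in> hom C W (Dom C g) \<and>
              Cmp C f x = Cmp C g y \<longrightarrow>
        (\<exists>!u. u \<in> hom C W (Dom C p) \<and> Cmp C p u = x \<and> Cmp C q u = y))"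

definition kernel_pair :: "('o, 'a, 'z) category_scheme \<Rightarrow> 'a \<Rightarrow> 'a \<Rightarrow> 'a \<Rightarrow> bool" where
  "kernel_pair C f p q \<longleftrightarrow> pullback C f f p q"

definition has_terminal :: "('o, 'a, 'z) category_scheme \<Rightarrow> bool" where
  "has_terminal C \<longleftrightarrow> (\<exists>T \<in> Obj C. \<forall>X \<in> Obj C. \<exists>!f. f \<in> hom C X T)"

definition has_finite_limits :: "('o, 'a, 'z) category_scheme \<Rightarrow> bool" where
  "has_finite_limits C \<longleftrightarrow> has_terminal C \<and>
     (\<forall>f \<in> Arr C. \<forall>g \<in> Arr C. Cod C f = Cod C g \<longrightarrow> (\<exists>p q. pullback C f g p q))"

definition regular_category :: "('o, 'a, 'z) category_scheme \<Rightarrow> bool" where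
  "regular_category C \<longleftrightarrow> is_category C \<and> has_finite_limits C \<and>
     (\<forall>f p q. kernel_pair C f p q \<longrightarrow> (\<exists>e. coequalizer C p q e)) \<and>
     (\<forall>e g p q. regular_epi C e \<and> pullback C e g p q \<longrightarrow> regular_epi C q)"

definition binary_product :: "('o, 'a, 'z) category_scheme \<Rightarrow> 'o \<Rightarrow> 'o \<Rightarrow> 'o \<Rightarrow> 'a \<Rightarrow> 'a \<Rightarrow> bool" where
  "binary_product C A B P p q \<longleftrightarrow>
     A \<in> Obj C \<and> B \<in> Obj C \<and> P \<in> Obj C \<and> p \<in> hom C P A \<and> q \<in> hom C P B \<and>
     (\<forall>W x y. W \<in> Obj C \<and> x \<in> hom C W A \<and> y \<in> hom C W B \<longrightarrow>
        (\<exists>!u. u \<in> hom C W P \<and> Cmp C p u = x \<and> Cmp C q u = y))"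

definition nary_product :: "('o, 'a, 'z) category_scheme \<Rightarrow> nat \<Rightarrow> (nat \<Rightarrow> 'o) \<Rightarrow> 'o \<Rightarrow> (nat \<Rightarrow> 'a) \<Rightarrow> bool" where
  "nary_product C n A P \<pi> \<longleftrightarrow>
     (\<forall>i < n. A i \<in> Obj C) \<and> P \<in> Obj C \<and> (\<forall>i < n. \<pi> i \<in> hom C P (A i)) \<and>
     (\<forall>W f. W \<in> Obj C \<and> (\<forall>i < n. f i \<in> hom C W (A i)) \<longrightarrow>
        (\<exists>!u. u \<in> hom C W P \<and> (\<forall>i < n. Cmp C (\<pi> i) u = f i)))"

definition same_subobject :: "('o, 'a, 'z) category_scheme \<Rightarrow> 'a \<Rightarrow> 'a \<Rightarrow> bool" where
  "same_subobject C m n \<longleftrightarrow> mono C m \<and> mono C n \<and> Cod C m = Cod C n \<and>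
     (\<exists>u. u \<in> hom C (Dom C m) (Dom C n) \<and> Cmp C n u = m) \<and>
     (\<exists>v. v \<in> hom C (Dom C n) (Dom C m) \<and> Cmp C m v = n)"

definition is_image :: "('o, 'a, 'z) category_scheme \<Rightarrow> 'a \<Rightarrow> 'a \<Rightarrow> 'a \<Rightarrow> bool" where
  "is_image C f m i \<longleftrightarrow> f \<in> Arr C \<and> mono C m \<and> Cod C m = Dom C f \<and> mono C i \<and>
     Cod C i = Cod C f \<and>
     (\<exists>e. regular_epi C e \<and> Dom C e = Dom C m \<and> Cod C e = Dom C i \<and>
          Cmp C i e = Cmp C f m)"

text \<open>Relations on X are given by a pair of arrows r1, r2 : R \<rightarrow> X (the two components of
  R \<rightarrow> X \<times> X). (a, b) \<in>_S \<theta>: the generalized elements a, b : S \<rightarrow> X jointly factor through \<theta>.\<close>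
definition cong_mod :: "('o, 'a, 'z) category_scheme \<Rightarrow> 'a \<Rightarrow> 'a \<Rightarrow> 'a \<times> 'a \<Rightarrow> bool" where
  "cong_mod C a b \<theta> \<longleftrightarrow>
     (\<exists>h. h \<in> hom C (Dom C a) (Dom C (fst \<theta>)) \<and> Cmp C (fst \<theta>) h = a \<and> Cmp C (snd \<theta>) h = b)"

definition effective_eq_rel :: "('o, 'a, 'z) category_scheme \<Rightarrow> 'o \<Rightarrow> 'a \<times> 'a \<Rightarrow> bool" where
  "effective_eq_rel C X \<theta> \<longleftrightarrow> (\<exists>f. f \<in> Arr C \<and> Dom C f = X \<and> kernel_pair C f (fst \<theta>) (snd \<theta>))"

definition approx_solvable :: "('o, 'a, 'z) category_scheme \<Rightarrow> 'o \<Rightarrow> 'o \<Rightarrow> (nat \<Rightarrow> 'a) \<Rightarrow> (nat \<Rightarrow> 'a \<times> 'a) \<Rightarrow> nat set \<Rightarrow> bool" where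
  "approx_solvable C X S a \<theta> I \<longleftrightarrow>
     (\<exists>\<alpha> x. regular_epi C \<alpha> \<and> Cod C \<alpha> = S \<and> x \<in> hom C (Dom C \<alpha>) X \<and>
        (\<forall>i \<in> I. cong_mod C x (Cmp C (a i) \<alpha>) (\<theta> i)))"

definition pairwise_CRT :: "('o, 'a, 'z) category_scheme \<Rightarrow> bool" where
  "pairwise_CRT C \<longleftrightarrow>
     (\<forall>X S m a \<theta>. X \<in> Obj C \<and> S \<in> Obj C \<and> 0 < m \<and>
        (\<forall>i < m. a i \<in> hom C S X \<and> effective_eq_rel C X (\<theta> i)) \<and>
        (\<forall>i < m. \<forall>j < m. approx_solvable C X S a \<theta> {i, j}) \<longrightarrow>
        approx_solvable C X S a \<theta> {..<m})"

definition finite_2fold_subobject_decompositions :: "('o, 'a, 'z) category_scheme \<Rightarrow> bool" where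
  "finite_2fold_subobject_decompositions C \<longleftrightarrow>
     (\<forall>n A P \<pi> s t. 0 < n \<and> nary_product C n A P \<pi> \<and>
        mono C s \<and> Cod C s = P \<and> mono C t \<and> Cod C t = P \<and>
        (\<forall>i < n. \<forall>j < n. \<forall>Q p q u. binary_product C (A i) (A j) Q p q \<and> u \<in> hom C P Q \<and>
            Cmp C p u = \<pi> i \<and> Cmp C q u = \<pi> j \<longrightarrow>
            (\<forall>ms mt. is_image C u s ms \<and> is_image C u t mt \<longrightarrow> same_subobject C ms mt)) \<longrightarrow>
        same_subobject C s t)"

end

theory Submission
  imports Defs
begin

(*
  For subobjects s, t of A_1 x ... x A_n it suffices, by symmetry, to show that s factors
  through t. Argue with generalized elements up to precomposition with regular epis. Because the
  image of s under each (pi_i, pi_j) is contained in that of t, every generalized element of s is,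
  after such a precomposition, an element of t with the same i-th and j-th coordinates. Doing
  this coordinate by coordinate yields a regular epi alpha onto the domain of s and elements a_i
  of t with pi_i t a_i = pi_i s alpha. With theta_i the kernel pair of pi_i t, the system
  x = a_i mod theta_i is then approximately pairwise solvable, so the pairwise Chinese remainder
  theorem gives a regular epi gamma and x with x = a_i gamma mod theta_i for all i. Then t x and
  s alpha gamma agree in every coordinate, hence are equal, and the diagonal fill-in of the
  regular epi alpha gamma against the mono t factors s through t.
*)

definition factors_through :: "('o, 'a, 'z) category_scheme \<Rightarrow> 'a \<Rightarrow> 'a \<Rightarrow> bool" where
  "factors_through C f g \<longleftrightarrow> (\<exists>w \<in> hom C (Dom C f) (Dom C g). Cmp C g w = f)"

lemma same_subobject_iff:
  "same_subobject C m m' \<longleftrightarrow>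
     mono C m \<and> mono C m' \<and> Cod C m = Cod C m' \<and> factors_through C m m' \<and> factors_through C m' m"
  unfolding same_subobject_def factors_through_def by blast

locale cat =
  fixes C :: "('o, 'a, 'z) category_scheme"
  assumes is_category: "is_category C"
begin

abbreviation cmp (infixr "\<cdot>" 75) where "g \<cdot> f \<equiv> Cmp C g f"

lemma dom_obj: "f \<in> Arr C \<Longrightarrow> Dom C f \<in> Obj C"
  and cod_obj: "f \<in> Arr C \<Longrightarrow> Cod C f \<in> Obj C"
  and ide_in_hom: "X \<in> Obj C \<Longrightarrow> Idt C X \<in> hom C X X"
  and comp_ide [simp]: "f \<in> Arr C \<Longrightarrow> Dom C f = X \<Longrightarrow> f \<cdot> Idt C X = f"
  and ide_comp [simp]: "f \<in> Arr C \<Longrightarrow> Cod C f = Y \<Longrightarrow> Idt C Y \<cdot> f = f"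
  using is_category unfolding is_category_def by blast+

lemma comp_in_hom: "f \<in> hom C X Y \<Longrightarrow> g \<in> hom C Y Z \<Longrightarrow> g \<cdot> f \<in> hom C X Z"
  using is_category unfolding is_category_def hom_def by auto

lemma arr_comp [simp]: "f \<in> Arr C \<Longrightarrow> g \<in> Arr C \<Longrightarrow> Cod C f = Dom C g \<Longrightarrow> g \<cdot> f \<in> Arr C"
  and dom_comp [simp]: "f \<in> Arr C \<Longrightarrow> g \<in> Arr C \<Longrightarrow> Cod C f = Dom C g \<Longrightarrow> Dom C (g \<cdot> f) = Dom C f"
  and cod_comp [simp]: "f \<in> Arr C \<Longrightarrow> g \<in> Arr C \<Longrightarrow> Cod C f = Dom C g \<Longrightarrow> Cod C (g \<cdot> f) = Cod C g"
  using is_category unfolding is_category_def hom_def by auto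

lemma comp_assoc:
  "f \<in> Arr C \<Longrightarrow> g \<in> Arr C \<Longrightarrow> h \<in> Arr C \<Longrightarrow> Cod C f = Dom C g \<Longrightarrow> Cod C g = Dom C h \<Longrightarrow>
     (h \<cdot> g) \<cdot> f = h \<cdot> g \<cdot> f"
proof -
  assume "f \<in> Arr C" "g \<in> Arr C" "h \<in> Arr C" "Cod C f = Dom C g" "Cod C g = Dom C h"
  moreover have "\<forall>f \<in> Arr C. \<forall>g \<in> Arr C. \<forall>h \<in> Arr C. Cod C f = Dom C g \<and> Cod C g = Dom C h \<longrightarrow>
      h \<cdot> g \<cdot> f = (h \<cdot> g) \<cdot> f"
    using is_category unfolding is_category_def by (elim conjE)
  ultimately show ?thesis by simp
qed

lemma comp_eq_whisker:
  assumes eq: "g \<cdot> f = g' \<cdot> f'" and "h \<in> hom C W X" "f \<in> hom C X Y" "g \<in> hom C Y Z"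
    "f' \<in> hom C X Y'" "g' \<in> hom C Y' Z"
  shows "g \<cdot> f \<cdot> h = g' \<cdot> f' \<cdot> h"
proof -
  have "g \<cdot> f \<cdot> h = (g \<cdot> f) \<cdot> h" "g' \<cdot> f' \<cdot> h = (g' \<cdot> f') \<cdot> h"
    using assms(2-) by (auto simp: hom_def comp_assoc)
  with eq show ?thesis by simp
qed

lemma hom_objs: "f \<in> hom C X Y \<Longrightarrow> X \<in> Obj C \<and> Y \<in> Obj C"
  unfolding hom_def using dom_obj cod_obj by auto

lemma mono_in_hom: "mono C m \<Longrightarrow> m \<in> hom C (Dom C m) (Cod C m)"
  unfolding mono_def hom_def by simp

lemma mono_cancel:
  assumes m: "mono C m" and "g \<in> hom C W (Dom C m)" "h \<in> hom C W (Dom C m)" "m \<cdot> g = m \<cdot> h"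
  shows "g = h"
proof -
  have "\<forall>g h. g \<in> Arr C \<and> h \<in> Arr C \<and> Cod C g = Dom C m \<and> Cod C h = Dom C m \<and>
          Dom C g = Dom C h \<and> m \<cdot> g = m \<cdot> h \<longrightarrow> g = h"
    using m unfolding mono_def by (elim conjE)
  then show ?thesis using assms unfolding hom_def by simp
qed

lemma coequalizerD:
  assumes "coequalizer C u v e"
  shows "u \<in> hom C (Dom C u) (Dom C e)" "v \<in> hom C (Dom C u) (Dom C e)"
    "e \<in> hom C (Dom C e) (Cod C e)" "e \<cdot> u = e \<cdot> v"
  using assms unfolding coequalizer_def hom_def by auto

lemma coequalizer_factor:
  assumes ce: "coequalizer C u v e" and h: "h \<in> hom C (Dom C e) Y" and hc: "h \<cdot> u = h \<cdot> v"
  shows "\<exists>!k. k \<in> hom C (Cod C e) Y \<and> k \<cdot> e = h"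
proof -
  have "\<forall>Y h. Y \<in> Obj C \<and> h \<in> hom C (Dom C e) Y \<and> h \<cdot> u = h \<cdot> v \<longrightarrow>
          (\<exists>!k. k \<in> hom C (Cod C e) Y \<and> k \<cdot> e = h)"
    using ce unfolding coequalizer_def by (elim conjE)
  then show ?thesis using h hc hom_objs[OF h] by blast
qed

lemma regular_epi_in_hom: "regular_epi C e \<Longrightarrow> e \<in> hom C (Dom C e) (Cod C e)"
  unfolding regular_epi_def using coequalizerD(3) by blast

lemma regular_epi_cancel:
  assumes e: "regular_epi C e" and g: "g \<in> hom C (Cod C e) Y" and h: "h \<in> hom C (Cod C e) Y"
    and eq: "g \<cdot> e = h \<cdot> e"
  shows "g = h"
proof -
  obtain u v where ce: "coequalizer C u v e" using e unfolding regular_epi_def by blast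
  note D = coequalizerD[OF ce]
  have ge: "g \<cdot> e \<in> hom C (Dom C e) Y" using comp_in_hom[OF D(3) g] .
  have "(g \<cdot> e) \<cdot> u = (g \<cdot> e) \<cdot> v"
    using D g by (simp add: hom_def comp_assoc)
  then have "\<exists>!k. k \<in> hom C (Cod C e) Y \<and> k \<cdot> e = g \<cdot> e"
    using coequalizer_factor[OF ce ge] by blast
  then show ?thesis using g h eq by (auto elim!: ex1E)
qed

lemma ide_regular_epi:
  assumes X: "X \<in> Obj C"
  shows "regular_epi C (Idt C X)"
proof -
  have i: "Idt C X \<in> Arr C" "Dom C (Idt C X) = X" "Cod C (Idt C X) = X"
    using ide_in_hom[OF X] unfolding hom_def by auto
  have "coequalizer C (Idt C X) (Idt C X) (Idt C X)"
    unfolding coequalizer_def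
  proof (intro conjI allI impI)
    fix Y h assume "Y \<in> Obj C \<and> h \<in> hom C (Dom C (Idt C X)) Y \<and> h \<cdot> Idt C X = h \<cdot> Idt C X"
    then have h: "h \<in> Arr C" "Dom C h = X" "Cod C h = Y" using i unfolding hom_def by auto
    show "\<exists>!k. k \<in> hom C (Cod C (Idt C X)) Y \<and> k \<cdot> Idt C X = h"
    proof (rule ex1I[of _ h])
      show "h \<in> hom C (Cod C (Idt C X)) Y \<and> h \<cdot> Idt C X = h"
        using h i comp_ide[of h] unfolding hom_def by auto
    next
      fix k assume "k \<in> hom C (Cod C (Idt C X)) Y \<and> k \<cdot> Idt C X = h"
      then show "k = h" using i comp_ide[of k] unfolding hom_def by auto
    qed
  qed (use i in simp_all)
  then show ?thesis unfolding regular_epi_def by blast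
qed

lemma regular_epi_mono_diagonal:
  assumes e: "regular_epi C e" and m: "mono C m"
    and x: "x \<in> hom C (Dom C e) (Dom C m)" and y: "y \<in> hom C (Cod C e) (Cod C m)"
    and square: "m \<cdot> x = y \<cdot> e"
  obtains d where "d \<in> hom C (Cod C e) (Dom C m)" "m \<cdot> d = y" "d \<cdot> e = x"
proof -
  obtain u v where ce: "coequalizer C u v e" using e unfolding regular_epi_def by blast
  note D = coequalizerD[OF ce] mono_in_hom[OF m]
  have "m \<cdot> x \<cdot> u = m \<cdot> x \<cdot> v"
  proof -
    have "m \<cdot> x \<cdot> u = y \<cdot> e \<cdot> u" using comp_eq_whisker[OF square D(1) x D(5) D(3) y] .
    also have "\<dots> = y \<cdot> e \<cdot> v" using D by simp
    also have "\<dots> = m \<cdot> x \<cdot> v" using comp_eq_whisker[OF square[symmetric] D(2) D(3) y x D(5)] .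
    finally show ?thesis .
  qed
  then have "x \<cdot> u = x \<cdot> v"
    using mono_cancel[OF m comp_in_hom[OF D(1) x] comp_in_hom[OF D(2) x]] by blast
  then obtain d where d: "d \<in> hom C (Cod C e) (Dom C m)" "d \<cdot> e = x"
    using coequalizer_factor[OF ce x] by blast
  have "(m \<cdot> d) \<cdot> e = y \<cdot> e" using D d x by (simp add: square hom_def comp_assoc)
  then have "m \<cdot> d = y" using regular_epi_cancel[OF e comp_in_hom[OF d(1) D(5)] y] by blast
  with d that show ?thesis by blast
qed

lemma coequalizer_comp_iso:
  assumes ce: "coequalizer C u v e" and m: "m \<in> hom C (Cod C e) Y" and d: "d \<in> hom C Y (Cod C e)"
    and md: "m \<cdot> d = Idt C Y" and dm: "d \<cdot> m = Idt C (Cod C e)"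
  shows "coequalizer C u v (m \<cdot> e)"
proof -
  note D = coequalizerD[OF ce]
  have me: "m \<cdot> e \<in> hom C (Dom C e) Y" using comp_in_hom[OF D(3) m] .
  show ?thesis unfolding coequalizer_def
  proof (intro conjI allI impI)
    show "(m \<cdot> e) \<cdot> u = (m \<cdot> e) \<cdot> v" using D m by (simp add: hom_def comp_assoc)
    fix Z h assume "Z \<in> Obj C \<and> h \<in> hom C (Dom C (m \<cdot> e)) Z \<and> h \<cdot> u = h \<cdot> v"
    then have h: "h \<in> hom C (Dom C e) Z" "h \<cdot> u = h \<cdot> v" using me unfolding hom_def by auto
    obtain k where k: "k \<in> hom C (Cod C e) Z" "k \<cdot> e = h"
      using coequalizer_factor[OF ce h] by blast
    show "\<exists>!k'. k' \<in> hom C (Cod C (m \<cdot> e)) Z \<and> k' \<cdot> m \<cdot> e = h"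
    proof (rule ex1I[of _ "k \<cdot> d"])
      have "(k \<cdot> d) \<cdot> m \<cdot> e = k \<cdot> (d \<cdot> m) \<cdot> e"
        using D m d k by (simp add: hom_def comp_assoc)
      then show "k \<cdot> d \<in> hom C (Cod C (m \<cdot> e)) Z \<and> (k \<cdot> d) \<cdot> m \<cdot> e = h"
        using comp_in_hom[OF d k(1)] me D(3) k(2) dm unfolding hom_def by auto
    next
      fix k' assume k': "k' \<in> hom C (Cod C (m \<cdot> e)) Z \<and> k' \<cdot> m \<cdot> e = h"
      then have k'Z: "k' \<in> hom C Y Z" using me unfolding hom_def by auto
      have "(k' \<cdot> m) \<cdot> e = k \<cdot> e" using D m k' k'Z k by (simp add: hom_def comp_assoc)
      then have "k' \<cdot> m = k" using regular_epi_cancel[OF _ comp_in_hom[OF m k'Z] k(1)] ce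
        unfolding regular_epi_def by blast
      then have "(k' \<cdot> m) \<cdot> d = k \<cdot> d" by simp
      then show "k' = k \<cdot> d" using md m d k'Z by (auto simp: hom_def comp_assoc)
    qed
  qed (use D me in \<open>simp_all add: hom_def\<close>)
qed

lemma pullbackD:
  assumes "pullback C f g p q"
  shows "p \<in> hom C (Dom C p) (Dom C f)" "q \<in> hom C (Dom C p) (Dom C g)"
    "f \<in> hom C (Dom C f) (Cod C f)" "g \<in> hom C (Dom C g) (Cod C f)" "f \<cdot> p = g \<cdot> q"
  using assms unfolding pullback_def hom_def by auto

lemma pullback_lift:
  assumes pb: "pullback C f g p q" and x: "x \<in> hom C W (Dom C f)" and y: "y \<in> hom C W (Dom C g)"
    and eq: "f \<cdot> x = g \<cdot> y"
  obtains k where "k \<in> hom C W (Dom C p)" "p \<cdot> k = x" "q \<cdot> k = y"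
proof -
  have "\<forall>W x y. W \<in> Obj C \<and> x \<in> hom C W (Dom C f) \<and> y \<in> hom C W (Dom C g) \<and> f \<cdot> x = g \<cdot> y \<longrightarrow>
          (\<exists>!k. k \<in> hom C W (Dom C p) \<and> p \<cdot> k = x \<and> q \<cdot> k = y)"
    using pb unfolding pullback_def by (elim conjE)
  then have "\<exists>!k. k \<in> hom C W (Dom C p) \<and> p \<cdot> k = x \<and> q \<cdot> k = y"
    using x y eq hom_objs[OF x] by simp
  then show thesis using that by (auto dest: ex1_implies_ex)
qed

lemma cong_mod_kernel_pair_iff:
  assumes kp: "kernel_pair C f p q" and y: "y \<in> hom C W (Dom C f)" and z: "z \<in> hom C W (Dom C f)"
  shows "cong_mod C y z (p, q) \<longleftrightarrow> f \<cdot> y = f \<cdot> z"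
proof
  note D = pullbackD[OF kp[unfolded kernel_pair_def]]
  assume "cong_mod C y z (p, q)"
  then obtain h where "h \<in> hom C W (Dom C p)" "p \<cdot> h = y" "q \<cdot> h = z"
    using y unfolding cong_mod_def hom_def by auto
  then show "f \<cdot> y = f \<cdot> z" using comp_eq_whisker[OF D(5) _ D(1) D(3) D(2) D(3)] by blast
next
  assume "f \<cdot> y = f \<cdot> z"
  then obtain k where "k \<in> hom C W (Dom C p)" "p \<cdot> k = y" "q \<cdot> k = z"
    using pullback_lift[OF kp[unfolded kernel_pair_def] y z] by blast
  then show "cong_mod C y z (p, q)" using y unfolding cong_mod_def hom_def by auto
qed

lemma nary_product_eqI:
  assumes product: "nary_product C n A P \<pi>" and u: "u \<in> hom C W P" and u': "u' \<in> hom C W P"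
    and eq: "\<And>i. i < n \<Longrightarrow> \<pi> i \<cdot> u = \<pi> i \<cdot> u'"
  shows "u = u'"
proof -
  have "\<forall>i < n. \<pi> i \<in> hom C P (A i)"
    using product unfolding nary_product_def by blast
  moreover have "\<forall>W f. W \<in> Obj C \<and> (\<forall>i < n. f i \<in> hom C W (A i)) \<longrightarrow>
          (\<exists>!u. u \<in> hom C W P \<and> (\<forall>i < n. \<pi> i \<cdot> u = f i))"
    using product unfolding nary_product_def by (elim conjE)
  ultimately have "\<exists>!v. v \<in> hom C W P \<and> (\<forall>i < n. \<pi> i \<cdot> v = \<pi> i \<cdot> u)"
    using hom_objs[OF u] comp_in_hom[OF u] by simp
  then show ?thesis using u u' eq by (elim ex1E) auto
qed

end

locale regular_cat =
  fixes C :: "('o, 'a, 'z) category_scheme"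
  assumes regular: "regular_category C"

sublocale regular_cat \<subseteq> cat
  using regular unfolding regular_category_def by unfold_locales blast

context regular_cat
begin

lemma pullback_exists:
  assumes "f \<in> Arr C" "g \<in> Arr C" "Cod C f = Cod C g"
  obtains p q where "pullback C f g p q"
  using assms regular unfolding regular_category_def has_finite_limits_def by blast

lemma regular_epi_pullback: "regular_epi C e \<Longrightarrow> pullback C e g p q \<Longrightarrow> regular_epi C q"
  using regular unfolding regular_category_def by blast

lemma kernel_pair_coequalizer: "kernel_pair C f p q \<Longrightarrow> \<exists>e. coequalizer C p q e"
  using regular unfolding regular_category_def by blast

lemma regular_epi_lift:
  assumes e: "regular_epi C e" and x: "x \<in> hom C Z (Cod C e)"
  obtains \<beta> y where "regular_epi C \<beta>" "Cod C \<beta> = Z" "y \<in> hom C (Dom C \<beta>) (Dom C e)"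
    "e \<cdot> y = x \<cdot> \<beta>"
proof -
  have "e \<in> Arr C" "x \<in> Arr C" "Cod C e = Cod C x"
    using regular_epi_in_hom[OF e] x unfolding hom_def by auto
  then obtain y \<beta> where pb: "pullback C e x y \<beta>" by (rule pullback_exists)
  note D = pullbackD[OF pb]
  show thesis
  proof (rule that)
    show "regular_epi C \<beta>" using regular_epi_pullback[OF e pb] .
  qed (use D x in \<open>auto simp: hom_def\<close>)
qed

lemma kernel_pair_coequalizer_factor_mono:
  assumes kp: "kernel_pair C f p q" and ce: "coequalizer C p q e"
    and m: "m \<in> hom C (Cod C e) (Cod C f)" and me: "m \<cdot> e = f"
  shows "mono C m"
  unfolding mono_def
proof (intro conjI allI impI)
  note P = pullbackD[OF kp[unfolded kernel_pair_def]] and E = coequalizerD[OF ce]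
  have re: "regular_epi C e" using ce unfolding regular_epi_def by blast
  have Dom_e: "Dom C e = Dom C f" using P E unfolding hom_def by auto
  have e: "e \<in> hom C (Dom C f) (Cod C e)" using E(3) Dom_e by simp
  show "m \<in> Arr C" using m unfolding hom_def by blast
  fix g h
  assume "g \<in> Arr C \<and> h \<in> Arr C \<and> Cod C g = Dom C m \<and> Cod C h = Dom C m \<and>
          Dom C g = Dom C h \<and> m \<cdot> g = m \<cdot> h"
  then have g: "g \<in> hom C (Dom C g) (Cod C e)" and h: "h \<in> hom C (Dom C g) (Cod C e)"
    and mgh: "m \<cdot> g = m \<cdot> h"
    using m unfolding hom_def by auto
  \<comment> \<open>lift g and h along e; the lifts have equal image under f, so e identifies them\<close>
  obtain \<beta>1 y1 where \<beta>1: "regular_epi C \<beta>1" "Cod C \<beta>1 = Dom C g"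
    and y1: "y1 \<in> hom C (Dom C \<beta>1) (Dom C e)" "e \<cdot> y1 = g \<cdot> \<beta>1"
    using regular_epi_lift[OF re g] .
  have b1: "\<beta>1 \<in> hom C (Dom C \<beta>1) (Dom C g)" using regular_epi_in_hom[OF \<beta>1(1)] \<beta>1(2) by simp
  obtain \<beta>2 y2 where \<beta>2: "regular_epi C \<beta>2" "Cod C \<beta>2 = Dom C \<beta>1"
    and y2: "y2 \<in> hom C (Dom C \<beta>2) (Dom C e)" "e \<cdot> y2 = (h \<cdot> \<beta>1) \<cdot> \<beta>2"
    using regular_epi_lift[OF re comp_in_hom[OF b1 h]] .
  have b2: "\<beta>2 \<in> hom C (Dom C \<beta>2) (Dom C \<beta>1)" using regular_epi_in_hom[OF \<beta>2(1)] \<beta>2(2) by simp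
  have w1: "e \<cdot> y1 \<cdot> \<beta>2 = g \<cdot> \<beta>1 \<cdot> \<beta>2" using comp_eq_whisker[OF y1(2) b2 y1(1) E(3) b1 g] .
  have w2: "e \<cdot> y2 = h \<cdot> \<beta>1 \<cdot> \<beta>2" using y2(2) b1 b2 h by (simp add: hom_def comp_assoc)
  have "f \<cdot> y1 \<cdot> \<beta>2 = m \<cdot> g \<cdot> \<beta>1 \<cdot> \<beta>2"
    using E(3) m y1(1) b2 by (simp add: me[symmetric] w1 hom_def comp_assoc)
  also have "\<dots> = m \<cdot> h \<cdot> \<beta>1 \<cdot> \<beta>2" using comp_eq_whisker[OF mgh comp_in_hom[OF b2 b1] g m h m] .
  also have "\<dots> = f \<cdot> y2" using E(3) m y2(1) by (simp add: me[symmetric] w2 hom_def comp_assoc)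
  finally obtain k where k: "k \<in> hom C (Dom C \<beta>2) (Dom C p)" "p \<cdot> k = y1 \<cdot> \<beta>2" "q \<cdot> k = y2"
    using pullback_lift[OF kp[unfolded kernel_pair_def]] comp_in_hom[OF b2 y1(1)] y2(1) Dom_e by metis
  have "g \<cdot> \<beta>1 \<cdot> \<beta>2 = e \<cdot> p \<cdot> k" using w1 k(2) by simp
  also have "\<dots> = e \<cdot> q \<cdot> k" using comp_eq_whisker[OF E(4) k(1) P(1) e P(2) e] .
  also have "\<dots> = h \<cdot> \<beta>1 \<cdot> \<beta>2" using w2 k(3) by simp
  finally have "(g \<cdot> \<beta>1) \<cdot> \<beta>2 = (h \<cdot> \<beta>1) \<cdot> \<beta>2" using g h b1 b2 by (simp add: hom_def comp_assoc)
  then have "g \<cdot> \<beta>1 = h \<cdot> \<beta>1"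
    by (rule regular_epi_cancel[OF \<beta>2(1) comp_in_hom[OF b1 g, folded \<beta>2(2)]
          comp_in_hom[OF b1 h, folded \<beta>2(2)]])
  then show "g = h" by (rule regular_epi_cancel[OF \<beta>1(1) g[folded \<beta>1(2)] h[folded \<beta>1(2)]])
qed

lemma image_factorization:
  assumes f: "f \<in> Arr C"
  obtains e m where "regular_epi C e" "mono C m" "Dom C e = Dom C f" "Cod C e = Dom C m"
    "Cod C m = Cod C f" "m \<cdot> e = f"
proof -
  obtain p q where kp: "kernel_pair C f p q"
    using pullback_exists[OF f f] unfolding kernel_pair_def by blast
  note P = pullbackD[OF kp[unfolded kernel_pair_def]]
  obtain e where ce: "coequalizer C p q e" using kernel_pair_coequalizer[OF kp] by blast
  note E = coequalizerD[OF ce]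
  have "f \<in> hom C (Dom C e) (Cod C f)" using P E unfolding hom_def by auto
  then obtain m where m: "m \<in> hom C (Cod C e) (Cod C f)" "m \<cdot> e = f"
    using coequalizer_factor[OF ce _ P(5)] by blast
  show thesis
  proof (rule that)
    show "regular_epi C e" using ce unfolding regular_epi_def by blast
    show "mono C m" using kernel_pair_coequalizer_factor_mono[OF kp ce m] .
  qed (use m E(3) \<open>f \<in> hom C (Dom C e) (Cod C f)\<close> in \<open>auto simp: hom_def\<close>)
qed

lemma regular_epi_comp:
  assumes f: "regular_epi C f" and g: "regular_epi C g" and fg: "Cod C f = Dom C g"
  shows "regular_epi C (g \<cdot> f)"
proof -
  have fh: "f \<in> hom C (Dom C f) (Dom C g)" using regular_epi_in_hom[OF f] fg by simp
  have gh: "g \<in> hom C (Dom C g) (Cod C g)" using regular_epi_in_hom[OF g] .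
  have gf: "g \<cdot> f \<in> hom C (Dom C f) (Cod C g)" using comp_in_hom[OF fh gh] .
  then obtain e m where e: "regular_epi C e" and m: "mono C m" and "Dom C e = Dom C f"
      "Cod C e = Dom C m" "Cod C m = Cod C g" and me: "m \<cdot> e = g \<cdot> f"
    using image_factorization[of "g \<cdot> f"] unfolding hom_def by auto
  then have eh: "e \<in> hom C (Dom C f) (Dom C m)" and mh: "m \<in> hom C (Dom C m) (Cod C g)"
    using regular_epi_in_hom[OF e] mono_in_hom[OF m] by simp_all
  \<comment> \<open>the mono part m of g f is an isomorphism: two diagonal fill-ins give it a section\<close>
  have "g \<in> hom C (Cod C f) (Cod C m)" using gh fg \<open>Cod C m = Cod C g\<close> by simp
  then obtain d where d: "d \<in> hom C (Cod C f) (Dom C m)" "m \<cdot> d = g"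
    using regular_epi_mono_diagonal[OF f m eh _ me] by blast
  have Y: "Cod C g \<in> Obj C" using hom_objs[OF gh] by blast
  obtain d' where d': "d' \<in> hom C (Cod C g) (Dom C m)" "m \<cdot> d' = Idt C (Cod C g)"
    using regular_epi_mono_diagonal[OF g m, of d "Idt C (Cod C g)"] d ide_in_hom[OF Y] gh fg
      \<open>Cod C m = Cod C g\<close> unfolding hom_def by auto
  have "m \<cdot> d' \<cdot> m = m \<cdot> Idt C (Dom C m)"
    using d' mh by (simp add: comp_assoc[symmetric] hom_def)
  then have d'm: "d' \<cdot> m = Idt C (Dom C m)"
    using mono_cancel[OF m comp_in_hom[OF mh d'(1)] ide_in_hom] hom_objs[OF mh] by blast
  obtain u v where "coequalizer C u v e" using e unfolding regular_epi_def by blast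
  then have "coequalizer C u v (m \<cdot> e)"
    using coequalizer_comp_iso[OF _ _ _ d'(2)] mh d'(1) d'm \<open>Cod C e = Dom C m\<close> by simp
  then show ?thesis using me unfolding regular_epi_def by metis
qed

lemma binary_product_exists:
  assumes A: "A \<in> Obj C" and B: "B \<in> Obj C"
  obtains Q p q where "binary_product C A B Q p q"
proof -
  have "has_terminal C" using regular unfolding regular_category_def has_finite_limits_def by blast
  then obtain T where T: "T \<in> Obj C" and terminal: "\<forall>X \<in> Obj C. \<exists>!t. t \<in> hom C X T"
    unfolding has_terminal_def by (elim bexE)
  obtain tA tB where tA: "tA \<in> hom C A T" and tB: "tB \<in> hom C B T"
    using terminal A B by (metis ex1_implies_ex)
  then obtain p q where pb: "pullback C tA tB p q"
    using pullback_exists[of tA tB] unfolding hom_def by auto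
  note D = pullbackD[OF pb]
  \<comment> \<open>a pullback over the terminal object is a product\<close>
  have "binary_product C A B (Dom C p) p q"
    unfolding binary_product_def
  proof (intro conjI allI impI)
    fix W x y assume "W \<in> Obj C \<and> x \<in> hom C W A \<and> y \<in> hom C W B"
    then have W: "W \<in> Obj C" and x: "x \<in> hom C W A" and y: "y \<in> hom C W B" by auto
    have "\<exists>!t. t \<in> hom C W T" using terminal W by blast
    then have "tA \<cdot> x = tB \<cdot> y"
      using comp_in_hom[OF x tA] comp_in_hom[OF y tB] by (elim ex1E) blast
    moreover have "x \<in> hom C W (Dom C tA)" "y \<in> hom C W (Dom C tB)"
      using x y tA tB unfolding hom_def by auto
    moreover have "\<forall>W x y. W \<in> Obj C \<and> x \<in> hom C W (Dom C tA) \<and> y \<in> hom C W (Dom C tB) \<and>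
        tA \<cdot> x = tB \<cdot> y \<longrightarrow> (\<exists>!u. u \<in> hom C W (Dom C p) \<and> p \<cdot> u = x \<and> q \<cdot> u = y)"
      using pb unfolding pullback_def by (elim conjE)
    ultimately show "\<exists>!u. u \<in> hom C W (Dom C p) \<and> p \<cdot> u = x \<and> q \<cdot> u = y"
      using W by simp
  qed (use A B D tA tB hom_objs[OF D(1)] in \<open>auto simp: hom_def\<close>)
  then show thesis by (rule that)
qed

definition kernel_rel :: "'a \<Rightarrow> 'a \<times> 'a" where
  "kernel_rel f = (SOME pq. kernel_pair C f (fst pq) (snd pq))"

lemma kernel_pair_kernel_rel:
  assumes "f \<in> Arr C"
  shows "kernel_pair C f (fst (kernel_rel f)) (snd (kernel_rel f))"
proof -
  obtain p q where "kernel_pair C f p q"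
    using pullback_exists[OF assms assms] unfolding kernel_pair_def by blast
  then have "\<exists>pq. kernel_pair C f (fst pq) (snd pq)" by (intro exI[of _ "(p, q)"]) simp
  then show ?thesis unfolding kernel_rel_def by (rule someI_ex)
qed

lemma image_exists:
  assumes u: "u \<in> Arr C" and m: "mono C m" and cod_m: "Cod C m = Dom C u"
  obtains i where "is_image C u m i"
proof -
  have um: "u \<cdot> m \<in> Arr C" "Dom C (u \<cdot> m) = Dom C m" "Cod C (u \<cdot> m) = Cod C u"
    using u mono_in_hom[OF m] cod_m unfolding hom_def by auto
  obtain e i where "regular_epi C e" "mono C i" "Dom C e = Dom C (u \<cdot> m)" "Cod C e = Dom C i"
      "Cod C i = Cod C (u \<cdot> m)" "i \<cdot> e = u \<cdot> m"
    using image_factorization[OF um(1)] by blast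
  then have "is_image C u m i"
    unfolding is_image_def using u m cod_m um(2,3) by (intro conjI exI[of _ e]) simp_all
  then show thesis by (rule that)
qed

lemma is_imageD:
  assumes "is_image C u m i"
  shows "u \<in> hom C (Cod C m) (Cod C u)" "m \<in> hom C (Dom C m) (Cod C m)"
    "i \<in> hom C (Dom C i) (Cod C u)"
  using assms mono_in_hom unfolding is_image_def hom_def by auto

lemma is_imageE:
  assumes "is_image C u m i"
  obtains e where "regular_epi C e" "e \<in> hom C (Dom C m) (Dom C i)" "i \<cdot> e = u \<cdot> m"
proof -
  from assms obtain e where e: "regular_epi C e" "Dom C e = Dom C m" "Cod C e = Dom C i" "i \<cdot> e = u \<cdot> m"
    unfolding is_image_def by (elim conjE exE)
  moreover have "e \<in> hom C (Dom C m) (Dom C i)" using regular_epi_in_hom[OF e(1)] e(2,3) by simp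
  ultimately show thesis using that by blast
qed

lemma image_le_lift:
  assumes ims: "is_image C u s ms" and imt: "is_image C u t mt" and le: "factors_through C ms mt"
    and g: "g \<in> hom C Z (Dom C s)"
  obtains \<beta> y where "regular_epi C \<beta>" "Cod C \<beta> = Z" "y \<in> hom C (Dom C \<beta>) (Dom C t)"
    "u \<cdot> t \<cdot> y = u \<cdot> s \<cdot> g \<cdot> \<beta>"
proof -
  obtain es where es: "regular_epi C es" "es \<in> hom C (Dom C s) (Dom C ms)" "ms \<cdot> es = u \<cdot> s"
    using ims by (rule is_imageE)
  obtain et where et: "regular_epi C et" "et \<in> hom C (Dom C t) (Dom C mt)" "mt \<cdot> et = u \<cdot> t"
    using imt by (rule is_imageE)
  obtain w where w: "w \<in> hom C (Dom C ms) (Dom C mt)" "mt \<cdot> w = ms"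
    using le unfolding factors_through_def by blast
  note S = is_imageD[OF ims] and T = is_imageD[OF imt]
  have "Cod C et = Dom C mt" "Dom C et = Dom C t"
    using et(2) unfolding hom_def by auto
  have x: "w \<cdot> es \<cdot> g \<in> hom C Z (Cod C et)"
    using comp_in_hom[OF comp_in_hom[OF g es(2)] w(1)] \<open>Cod C et = Dom C mt\<close> by simp
  obtain \<beta> y where \<beta>: "regular_epi C \<beta>" "Cod C \<beta> = Z"
    and y: "y \<in> hom C (Dom C \<beta>) (Dom C t)" "et \<cdot> y = (w \<cdot> es \<cdot> g) \<cdot> \<beta>"
    using regular_epi_lift[OF et(1) x] \<open>Dom C et = Dom C t\<close> by metis
  have b: "\<beta> \<in> hom C (Dom C \<beta>) Z" using regular_epi_in_hom[OF \<beta>(1)] \<beta>(2) by simp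
  have "u \<cdot> t \<cdot> y = mt \<cdot> et \<cdot> y"
    using comp_eq_whisker[OF et(3) y(1) et(2) T(3) T(2) T(1)] by simp
  also have "\<dots> = (mt \<cdot> w) \<cdot> es \<cdot> g \<cdot> \<beta>"
    using y(2) T(3) w(1) es(2) g b by (simp add: hom_def comp_assoc)
  also have "\<dots> = u \<cdot> s \<cdot> g \<cdot> \<beta>"
    using comp_eq_whisker[OF es(3) comp_in_hom[OF b g] es(2) S(3) S(2) S(1)] by (simp add: w(2))
  finally show thesis using that \<beta> y(1) by simp
qed

end

locale pairwise_images_le = regular_cat +
  fixes n :: nat and A and P and \<pi> and s t
  assumes product: "nary_product C n A P \<pi>"
    and mono_s: "mono C s" and cod_s: "Cod C s = P"
    and mono_t: "mono C t" and cod_t: "Cod C t = P"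
    and images_le: "\<And>i j Q p q u ms mt. i < n \<Longrightarrow> j < n \<Longrightarrow> binary_product C (A i) (A j) Q p q \<Longrightarrow>
      u \<in> hom C P Q \<Longrightarrow> p \<cdot> u = \<pi> i \<Longrightarrow> q \<cdot> u = \<pi> j \<Longrightarrow>
      is_image C u s ms \<Longrightarrow> is_image C u t mt \<Longrightarrow> factors_through C ms mt"
begin

lemma s_in_hom: "s \<in> hom C (Dom C s) P"
  and t_in_hom: "t \<in> hom C (Dom C t) P"
  using mono_in_hom[OF mono_s] mono_in_hom[OF mono_t] cod_s cod_t by simp_all

lemma factor_obj: "i < n \<Longrightarrow> A i \<in> Obj C"
  and projection_in_hom: "i < n \<Longrightarrow> \<pi> i \<in> hom C P (A i)"
  using product unfolding nary_product_def by blast+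

lemma coordinate_pair_lift:
  assumes i: "i < n" and j: "j < n" and g: "g \<in> hom C Z (Dom C s)"
  obtains \<beta> y where "regular_epi C \<beta>" "Cod C \<beta> = Z" "y \<in> hom C (Dom C \<beta>) (Dom C t)"
    "\<pi> i \<cdot> t \<cdot> y = \<pi> i \<cdot> s \<cdot> g \<cdot> \<beta>" "\<pi> j \<cdot> t \<cdot> y = \<pi> j \<cdot> s \<cdot> g \<cdot> \<beta>"
proof -
  obtain Q p q where bp: "binary_product C (A i) (A j) Q p q"
    using binary_product_exists[OF factor_obj[OF i] factor_obj[OF j]] .
  have pq: "p \<in> hom C Q (A i)" "q \<in> hom C Q (A j)" using bp unfolding binary_product_def by auto
  have "P \<in> Obj C" using hom_objs[OF s_in_hom] by blast
  then obtain u where u: "u \<in> hom C P Q" "p \<cdot> u = \<pi> i" "q \<cdot> u = \<pi> j"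
    using bp projection_in_hom[OF i] projection_in_hom[OF j] unfolding binary_product_def by blast
  have "u \<in> Arr C" "Dom C u = P" using u(1) unfolding hom_def by auto
  then obtain ms mt where ims: "is_image C u s ms" and imt: "is_image C u t mt"
    using image_exists[OF _ mono_s] image_exists[OF _ mono_t] cod_s cod_t by metis
  obtain \<beta> y where \<beta>: "regular_epi C \<beta>" "Cod C \<beta> = Z" and y: "y \<in> hom C (Dom C \<beta>) (Dom C t)"
    and eq: "u \<cdot> t \<cdot> y = u \<cdot> s \<cdot> g \<cdot> \<beta>"
    using image_le_lift[OF ims imt images_le[OF i j bp u ims imt] g] .
  have b: "\<beta> \<in> hom C (Dom C \<beta>) Z" using regular_epi_in_hom[OF \<beta>(1)] \<beta>(2) by simp
  note T = u(1) pq s_in_hom t_in_hom y b g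
  have "\<pi> i \<cdot> t \<cdot> y = \<pi> i \<cdot> s \<cdot> g \<cdot> \<beta>" "\<pi> j \<cdot> t \<cdot> y = \<pi> j \<cdot> s \<cdot> g \<cdot> \<beta>"
    using T by (simp_all add: u(2,3)[symmetric] eq hom_def comp_assoc)
  with that \<beta> y show thesis by blast
qed

lemma coordinate_eq_precomp:
  assumes i: "i < n" and eq: "\<pi> i \<cdot> t \<cdot> y = \<pi> i \<cdot> s \<cdot> g"
    and y: "y \<in> hom C W (Dom C t)" and g: "g \<in> hom C W (Dom C s)" and h: "h \<in> hom C V W"
  shows "\<pi> i \<cdot> t \<cdot> y \<cdot> h = \<pi> i \<cdot> s \<cdot> g \<cdot> h"
proof -
  from eq have "(\<pi> i \<cdot> t \<cdot> y) \<cdot> h = (\<pi> i \<cdot> s \<cdot> g) \<cdot> h" by simp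
  then show ?thesis
    using projection_in_hom[OF i] s_in_hom t_in_hom y g h by (simp add: hom_def comp_assoc)
qed

definition coordinate_lifts where
  "coordinate_lifts \<alpha> a k \<longleftrightarrow> regular_epi C \<alpha> \<and> Cod C \<alpha> = Dom C s \<and>
     (\<forall>i < k. a i \<in> hom C (Dom C \<alpha>) (Dom C t) \<and> \<pi> i \<cdot> t \<cdot> a i = \<pi> i \<cdot> s \<cdot> \<alpha>)"

lemma coordinate_lifts_exist: "k \<le> n \<Longrightarrow> \<exists>\<alpha> a. coordinate_lifts \<alpha> a k"
proof (induction k)
  case 0
  have "Dom C s \<in> Obj C" using hom_objs[OF s_in_hom] by blast
  then show ?case
    using ide_regular_epi ide_in_hom[of "Dom C s"] unfolding coordinate_lifts_def hom_def
    by (intro exI) auto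
next
  case (Suc k)
  then obtain \<alpha> a where \<alpha>: "regular_epi C \<alpha>" "Cod C \<alpha> = Dom C s"
    and a: "\<forall>i < k. a i \<in> hom C (Dom C \<alpha>) (Dom C t) \<and> \<pi> i \<cdot> t \<cdot> a i = \<pi> i \<cdot> s \<cdot> \<alpha>"
    unfolding coordinate_lifts_def by auto
  have k: "k < n" using Suc.prems by simp
  have ah: "\<alpha> \<in> hom C (Dom C \<alpha>) (Dom C s)" using regular_epi_in_hom[OF \<alpha>(1)] \<alpha>(2) by simp
  obtain \<beta> y where \<beta>: "regular_epi C \<beta>" "Cod C \<beta> = Dom C \<alpha>"
    and y: "y \<in> hom C (Dom C \<beta>) (Dom C t)" "\<pi> k \<cdot> t \<cdot> y = \<pi> k \<cdot> s \<cdot> \<alpha> \<cdot> \<beta>"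
    using coordinate_pair_lift[OF k k ah] by metis
  have bh: "\<beta> \<in> hom C (Dom C \<beta>) (Dom C \<alpha>)" using regular_epi_in_hom[OF \<beta>(1)] \<beta>(2) by simp
  have ab: "Dom C (\<alpha> \<cdot> \<beta>) = Dom C \<beta>" "Cod C (\<alpha> \<cdot> \<beta>) = Dom C s"
    using comp_in_hom[OF bh ah] unfolding hom_def by auto
  define a' where "a' i = (if i < k then a i \<cdot> \<beta> else y)" for i
  have "a' i \<in> hom C (Dom C (\<alpha> \<cdot> \<beta>)) (Dom C t) \<and> \<pi> i \<cdot> t \<cdot> a' i = \<pi> i \<cdot> s \<cdot> \<alpha> \<cdot> \<beta>"
    if "i < Suc k" for i
  proof (cases "i < k")
    case True
    then have ai: "a i \<in> hom C (Dom C \<alpha>) (Dom C t)" "\<pi> i \<cdot> t \<cdot> a i = \<pi> i \<cdot> s \<cdot> \<alpha>" using a by auto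
    have "i < n" using True k by simp
    then show ?thesis
      using coordinate_eq_precomp[OF _ ai(2) ai(1) ah bh] comp_in_hom[OF bh ai(1)] True ab
      unfolding a'_def by simp
  next
    case False
    then have "i = k" using that by simp
    then show ?thesis using False y ab unfolding a'_def by simp
  qed
  then have "coordinate_lifts (\<alpha> \<cdot> \<beta>) a' (Suc k)"
    using regular_epi_comp[OF \<beta>(1) \<alpha>(1) \<beta>(2)] ab unfolding coordinate_lifts_def by auto
  then show ?case by blast
qed

lemma coordinate_lifts_in_hom:
  assumes "coordinate_lifts \<alpha> a n"
  shows "\<alpha> \<in> hom C (Dom C \<alpha>) (Dom C s)" "\<And>i. i < n \<Longrightarrow> a i \<in> hom C (Dom C \<alpha>) (Dom C t)"
    and coordinate_lifts_eq: "\<And>i. i < n \<Longrightarrow> \<pi> i \<cdot> t \<cdot> a i = \<pi> i \<cdot> s \<cdot> \<alpha>"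
  using assms regular_epi_in_hom[of \<alpha>] unfolding coordinate_lifts_def by auto

definition \<theta> where
  "\<theta> i = kernel_rel (\<pi> i \<cdot> t)"

lemma kernel_pair_\<theta>: "i < n \<Longrightarrow> kernel_pair C (\<pi> i \<cdot> t) (fst (\<theta> i)) (snd (\<theta> i))"
  using kernel_pair_kernel_rel comp_in_hom[OF t_in_hom projection_in_hom]
  unfolding \<theta>_def hom_def by auto

lemma effective_\<theta>: "i < n \<Longrightarrow> effective_eq_rel C (Dom C t) (\<theta> i)"
  unfolding effective_eq_rel_def
  using kernel_pair_\<theta> comp_in_hom[OF t_in_hom projection_in_hom]
  by (intro exI[of _ "\<pi> i \<cdot> t"]) (auto simp: hom_def)

lemma cong_mod_\<theta>_iff:
  assumes "i < n" "y \<in> hom C W (Dom C t)" "z \<in> hom C W (Dom C t)"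
  shows "cong_mod C y z (\<theta> i) \<longleftrightarrow> \<pi> i \<cdot> t \<cdot> y = \<pi> i \<cdot> t \<cdot> z"
  using cong_mod_kernel_pair_iff[OF kernel_pair_\<theta>, of i y W z] assms t_in_hom
    projection_in_hom[OF assms(1)]
  by (simp add: hom_def comp_assoc)

lemma approx_solvable_pair:
  assumes lifts: "coordinate_lifts \<alpha> a n" and ij: "i < n" "j < n"
  shows "approx_solvable C (Dom C t) (Dom C \<alpha>) a \<theta> {i, j}"
proof -
  note A = coordinate_lifts_in_hom[OF lifts]
  obtain \<beta> y where \<beta>: "regular_epi C \<beta>" "Cod C \<beta> = Dom C \<alpha>"
    and y: "y \<in> hom C (Dom C \<beta>) (Dom C t)" "\<pi> i \<cdot> t \<cdot> y = \<pi> i \<cdot> s \<cdot> \<alpha> \<cdot> \<beta>"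
      "\<pi> j \<cdot> t \<cdot> y = \<pi> j \<cdot> s \<cdot> \<alpha> \<cdot> \<beta>"
    using coordinate_pair_lift[OF ij A(1)] by metis
  have bh: "\<beta> \<in> hom C (Dom C \<beta>) (Dom C \<alpha>)" using regular_epi_in_hom[OF \<beta>(1)] \<beta>(2) by simp
  have "cong_mod C y (a l \<cdot> \<beta>) (\<theta> l)" if "l \<in> {i, j}" for l
  proof -
    have l: "l < n" using that ij by auto
    then show ?thesis
      using cong_mod_\<theta>_iff[OF l y(1) comp_in_hom[OF bh A(2)[OF l]]] y that
        coordinate_eq_precomp[OF l A(3)[OF l] A(2)[OF l] A(1) bh]
      by auto
  qed
  then show ?thesis unfolding approx_solvable_def using \<beta> y(1) by blast
qed

lemma factors_through_of_approx_solvable: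
  assumes lifts: "coordinate_lifts \<alpha> a n" and sol: "approx_solvable C (Dom C t) (Dom C \<alpha>) a \<theta> {..<n}"
  shows "factors_through C s t"
proof -
  note A = coordinate_lifts_in_hom[OF lifts]
  obtain \<gamma> x where \<gamma>: "regular_epi C \<gamma>" "Cod C \<gamma> = Dom C \<alpha>"
    and x: "x \<in> hom C (Dom C \<gamma>) (Dom C t)" "\<And>i. i < n \<Longrightarrow> cong_mod C x (a i \<cdot> \<gamma>) (\<theta> i)"
    using sol unfolding approx_solvable_def by auto
  have gh: "\<gamma> \<in> hom C (Dom C \<gamma>) (Dom C \<alpha>)" using regular_epi_in_hom[OF \<gamma>(1)] \<gamma>(2) by simp
  have "t \<cdot> x = s \<cdot> \<alpha> \<cdot> \<gamma>"
  proof (rule nary_product_eqI[OF product])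
    show "t \<cdot> x \<in> hom C (Dom C \<gamma>) P" "s \<cdot> \<alpha> \<cdot> \<gamma> \<in> hom C (Dom C \<gamma>) P"
      using comp_in_hom[OF x(1) t_in_hom] comp_in_hom[OF comp_in_hom[OF gh A(1)] s_in_hom] .
    fix i assume i: "i < n"
    have "\<pi> i \<cdot> t \<cdot> x = \<pi> i \<cdot> t \<cdot> a i \<cdot> \<gamma>"
      using cong_mod_\<theta>_iff[OF i x(1) comp_in_hom[OF gh A(2)[OF i]]] x(2)[OF i] by simp
    also have "\<dots> = \<pi> i \<cdot> s \<cdot> \<alpha> \<cdot> \<gamma>" using coordinate_eq_precomp[OF i A(3)[OF i] A(2)[OF i] A(1) gh] .
    finally show "\<pi> i \<cdot> t \<cdot> x = \<pi> i \<cdot> s \<cdot> \<alpha> \<cdot> \<gamma>" .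
  qed
  moreover have "regular_epi C (\<alpha> \<cdot> \<gamma>)"
    using regular_epi_comp[OF \<gamma>(1) _ \<gamma>(2)] lifts unfolding coordinate_lifts_def by blast
  moreover have "Dom C (\<alpha> \<cdot> \<gamma>) = Dom C \<gamma>" "Cod C (\<alpha> \<cdot> \<gamma>) = Dom C s"
    using comp_in_hom[OF gh A(1)] unfolding hom_def by auto
  ultimately obtain d where "d \<in> hom C (Dom C s) (Dom C t)" "t \<cdot> d = s"
    using regular_epi_mono_diagonal[OF _ mono_t, of "\<alpha> \<cdot> \<gamma>" x s] x(1) s_in_hom cod_t by auto
  then show ?thesis unfolding factors_through_def by blast
qed

lemma factors_through_if_pairwise_CRT:
  assumes crt: "pairwise_CRT C" and n: "0 < n"
  shows "factors_through C s t"
proof -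
  obtain \<alpha> a where lifts: "coordinate_lifts \<alpha> a n" using coordinate_lifts_exist by blast
  note A = coordinate_lifts_in_hom[OF lifts]
  have "approx_solvable C (Dom C t) (Dom C \<alpha>) a \<theta> {..<n}"
    using crt[unfolded pairwise_CRT_def, rule_format, of "Dom C t" "Dom C \<alpha>" n a \<theta>]
      hom_objs[OF t_in_hom] hom_objs[OF A(1)] n A(2) effective_\<theta> approx_solvable_pair[OF lifts]
    by blast
  then show ?thesis by (rule factors_through_of_approx_solvable[OF lifts])
qed

end

theorem lemma5p5:
  fixes C :: "('o, 'a) category"
  assumes "regular_category C"
    and "pairwise_CRT C"
  shows "finite_2fold_subobject_decompositions C"
  unfolding finite_2fold_subobject_decompositions_def
proof (intro allI impI, elim conjE)
  fix n A P \<pi> s t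
  assume n: "0 < n" and product: "nary_product C n A P \<pi>"
    and s: "mono C s" "Cod C s = P" and t: "mono C t" "Cod C t = P"
    and images: "\<forall>i < n. \<forall>j < n. \<forall>Q p q u. binary_product C (A i) (A j) Q p q \<and> u \<in> hom C P Q \<and>
      Cmp C p u = \<pi> i \<and> Cmp C q u = \<pi> j \<longrightarrow>
      (\<forall>ms mt. is_image C u s ms \<and> is_image C u t mt \<longrightarrow> same_subobject C ms mt)"
  have images_le: "factors_through C ms mt" "factors_through C mt ms"
    if "i < n" "j < n" "binary_product C (A i) (A j) Q p q" "u \<in> hom C P Q"
      "Cmp C p u = \<pi> i" "Cmp C q u = \<pi> j" "is_image C u s ms" "is_image C u t mt" for i j Q p q u ms mt
    using images that by (auto simp: same_subobject_iff)
  have regular: "regular_cat C" using assms(1) by (rule regular_cat.intro)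
  have "factors_through C s t"
    by (rule pairwise_images_le.factors_through_if_pairwise_CRT[OF _ assms(2) n],
        rule pairwise_images_le.intro[OF regular pairwise_images_le_axioms.intro[OF product s t]])
      (rule images_le(1))
  moreover have "factors_through C t s"
    by (rule pairwise_images_le.factors_through_if_pairwise_CRT[OF _ assms(2) n],
        rule pairwise_images_le.intro[OF regular pairwise_images_le_axioms.intro[OF product t s]])
      (rule images_le(2))
  ultimately show "same_subobject C s t" using s t by (simp add: same_subobject_iff)
qed

end
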